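(* Let $H$ be a triangle-free simple graph and $k\ge1$. Then $\nu(I_k \vee H) = \alpha'_k(H)$ and $\tau(I_k \vee H) = k|V(H)| - \phi_k(H)$.
   Context: $I_k$ is an independent set of $k$ vertices; the join $G_1\vee G_2$ is obtained from the disjoint union of $G_1,G_2$ by adding all edges between $V(G_1)$ and $V(G_2)$. For a graph $G$, $\tau(G)$ is the minimum size of an edge set $X$ with $G-X$ triangle-free, and $\nu(G)$ is the maximum number of pairwise edge-disjoint triangles in $G$. $\alpha'_k(G)$ is the maximum number of edges of a $k$-edge-colorable subgraph of $G$. For $D\subseteq V(G)$, $\phi_k(D)=k|D|-|E(G[D])|$ and $\phi_k(G)=\max_{D\subseteq V(G)}\phi_k(D)$. *)

theory Defs
  imports Main
begin

definition simple_graph :: "'a set \<Rightarrow> 'a set set \<Rightarrow> bool" where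
  "simple_graph V E \<longleftrightarrow> finite V \<and> (\<forall>e\<in>E. e \<subseteq> V \<and> card e = 2)"

definition triangles :: "'a set \<Rightarrow> 'a set set \<Rightarrow> 'a set set" where
  "triangles V E = {t. t \<subseteq> V \<and> card t = 3 \<and> (\<forall>e. e \<subseteq> t \<and> card e = 2 \<longrightarrow> e \<in> E)}"

definition tri_edges :: "'a set \<Rightarrow> 'a set set" where
  "tri_edges t = {e. e \<subseteq> t \<and> card e = 2}"

definition triangle_free :: "'a set \<Rightarrow> 'a set set \<Rightarrow> bool" where
  "triangle_free V E \<longleftrightarrow> triangles V E = {}"

definition tri_packing_num :: "'a set \<Rightarrow> 'a set set \<Rightarrow> nat" where
  "tri_packing_num V E = Max {card T | T. T \<subseteq> triangles V E \<and>
      (\<forall>t1\<in>T. \<forall>t2\<in>T. t1 \<noteq> t2 \<longrightarrow> tri_edges t1 \<inter> tri_edges t2 = {})}"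

definition tri_cover_num :: "'a set \<Rightarrow> 'a set set \<Rightarrow> nat" where
  "tri_cover_num V E = Min {card X | X. X \<subseteq> E \<and> triangle_free V (E - X)}"

definition k_edge_colorable :: "nat \<Rightarrow> 'a set set \<Rightarrow> bool" where
  "k_edge_colorable k F \<longleftrightarrow> (\<exists>c. (\<forall>e\<in>F. c e < k) \<and>
      (\<forall>e\<in>F. \<forall>e'\<in>F. e \<noteq> e' \<and> e \<inter> e' \<noteq> {} \<longrightarrow> c e \<noteq> c e'))"

definition max_k_col_edges :: "nat \<Rightarrow> 'a set \<Rightarrow> 'a set set \<Rightarrow> nat" where
  "max_k_col_edges k V E = Max {card F | F. F \<subseteq> E \<and> k_edge_colorable k F}"

definition induced_edges :: "'a set set \<Rightarrow> 'a set \<Rightarrow> 'a set set" where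
  "induced_edges E D = {e\<in>E. e \<subseteq> D}"

definition phi_set :: "nat \<Rightarrow> 'a set set \<Rightarrow> 'a set \<Rightarrow> int" where
  "phi_set k E D = int k * int (card D) - int (card (induced_edges E D))"

definition phi :: "nat \<Rightarrow> 'a set \<Rightarrow> 'a set set \<Rightarrow> int" where
  "phi k V E = Max {phi_set k E D | D. D \<subseteq> V}"

definition join_Ik_V :: "nat \<Rightarrow> 'a set \<Rightarrow> ('a + nat) set" where
  "join_Ik_V k V = Inl ` V \<union> Inr ` {..<k}"

definition join_Ik_E :: "nat \<Rightarrow> 'a set \<Rightarrow> 'a set set \<Rightarrow> ('a + nat) set set" where
  "join_Ik_E k V E = (\<lambda>e. Inl ` e) ` E \<union> {{Inl v, Inr i} | v i. v \<in> V \<and> i < k}"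

end

theory Submission
  imports Defs
begin

text \<open>
  Since \<open>H\<close> is triangle-free and \<open>I\<^sub>k\<close> is independent, every triangle of \<open>I\<^sub>k \<or> H\<close> consists
  of an edge \<open>e\<close> of \<open>H\<close> and a vertex \<open>i\<close> of \<open>I\<^sub>k\<close>; think of it as the edge \<open>e\<close> coloured \<open>i\<close>.
  Two such triangles share an edge iff they come from the same edge of \<open>H\<close>, or from
  adjacent edges with the same colour. Hence edge-disjoint triangle packings are exactly
  proper partial \<open>k\<close>-edge-colourings of \<open>H\<close>, which gives \<open>\<nu> = \<alpha>'\<^sub>k(H)\<close>.

  For \<open>\<tau>\<close>: given \<open>D \<subseteq> V(H)\<close>, deleting all edges between \<open>V(H) - D\<close> and \<open>I\<^sub>k\<close> together with
  all edges of \<open>H[D]\<close> kills every triangle and costs \<open>k|V(H)| - \<phi>\<^sub>k(D)\<close> edges. Conversely,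
  for a triangle-hitting set \<open>X\<close> let \<open>D\<^sub>i\<close> be the vertices still joined to the \<open>i\<close>-th vertex
  of \<open>I\<^sub>k\<close>; then \<open>X\<close> contains all edges of every \<open>H[D\<^sub>i]\<close>, and averaging over \<open>i\<close> yields some
  \<open>i\<close> with \<open>|X| \<ge> k|V(H)| - \<phi>\<^sub>k(D\<^sub>i)\<close>.
\<close>

lemma triangles_Diff:
  "triangles V (E - X) = {t \<in> triangles V E. tri_edges t \<inter> X = {}}"
  unfolding triangles_def tri_edges_def by blast

lemma exists_le_average:
  fixes f :: "'b \<Rightarrow> 'c::linordered_idom"
  assumes "finite A" "A \<noteq> {}" "sum f A \<le> of_nat (card A) * x"
  shows "\<exists>a\<in>A. f a \<le> x"
proof (rule ccontr)
  assume "\<not> ?thesis"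
  then have "sum (\<lambda>_. x) A < sum f A"
    using assms(1,2) by (intro sum_strict_mono) auto
  then show False
    using assms(3) by simp
qed

lemma card_sum_set:
  assumes "finite S"
  shows "card S = card (Inl -` S) + card (Inr -` S)"
proof -
  have "card S = card (S \<inter> range Inl \<union> S \<inter> range Inr)"
    by (rule arg_cong[where f = card]) (auto intro: sum.exhaust_sel)
  also have "\<dots> = card (S \<inter> range Inl) + card (S \<inter> range Inr)"
    using assms by (intro card_Un_disjoint) auto
  also have "card (S \<inter> range Inl) = card (Inl -` S)"
    using card_vimage_inj[OF inj_Inl, of "S \<inter> range Inl"] by (simp add: vimage_Int inj_vimage_image_eq)
  also have "card (S \<inter> range Inr) = card (Inr -` S)"
    using card_vimage_inj[OF inj_Inr, of "S \<inter> range Inr"] by (simp add: vimage_Int inj_vimage_image_eq)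
  finally show ?thesis .
qed

lemma simple_graph_edgeE:
  assumes "simple_graph V E" "e \<in> E"
  obtains u v where "u \<noteq> v" "e = {u, v}" "u \<in> V" "v \<in> V"
  using assms unfolding simple_graph_def by (auto simp: card_2_iff)

lemma finite_vertices:
  assumes "simple_graph V E"
  shows "finite V"
  using assms unfolding simple_graph_def by simp

lemma finite_edges:
  assumes "simple_graph V E"
  shows "finite E"
  using assms unfolding simple_graph_def by (meson Pow_iff finite_Pow_iff finite_subset subsetI)

lemma phi_set_le_phi:
  assumes "finite V" "D \<subseteq> V"
  shows "phi_set k E D \<le> phi k V E"
  unfolding phi_def using assms by (intro Max_ge) auto

lemma phi_attained:
  assumes "finite V"
  obtains D where "D \<subseteq> V" "phi k V E = phi_set k E D"
proof -
  have "phi k V E \<in> {phi_set k E D | D. D \<subseteq> V}"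
    unfolding phi_def using assms by (intro Max_in) auto
  then show thesis
    using that by blast
qed

text \<open>\<open>P\<close> is the graph \<open>{(e, c e) | e. \<dots>}\<close> of a proper partial edge colouring \<open>c\<close>.\<close>

definition proper_coloured :: "('a set \<times> nat) set \<Rightarrow> bool" where
  "proper_coloured P \<longleftrightarrow> pairwise (\<lambda>(e, i) (e', j). e \<noteq> e' \<and> (i = j \<longrightarrow> disjnt e e')) P"

lemma colourable_card_eq_proper_coloured_card:
  "{card F | F. F \<subseteq> E \<and> k_edge_colorable k F}
   = {card P | P. P \<subseteq> E \<times> {..<k} \<and> proper_coloured P}"
proof (intro set_eqI iffI; elim CollectE exE conjE)
  fix n F assume n: "n = card F" and F: "F \<subseteq> E" "k_edge_colorable k F"
  then obtain c where c: "\<forall>e\<in>F. c e < k"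
    "\<forall>e\<in>F. \<forall>e'\<in>F. e \<noteq> e' \<and> e \<inter> e' \<noteq> {} \<longrightarrow> c e \<noteq> c e'"
    unfolding k_edge_colorable_def by blast
  define P where "P = (\<lambda>e. (e, c e)) ` F"
  have "P \<subseteq> E \<times> {..<k}"
    using F c unfolding P_def by auto
  moreover have "proper_coloured P"
    using c unfolding P_def proper_coloured_def pairwise_def disjnt_def by blast
  moreover have "card P = card F"
    unfolding P_def by (rule card_image) (simp add: inj_on_def)
  ultimately show "n \<in> {card P | P. P \<subseteq> E \<times> {..<k} \<and> proper_coloured P}"
    using n by (intro CollectI exI[of _ P]) simp
next
  fix n P assume n: "n = card P" and P: "P \<subseteq> E \<times> {..<k}" "proper_coloured P"
  have inj: "inj_on fst P"
    using P(2) unfolding proper_coloured_def pairwise_def inj_on_def by fastforce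
  define c where "c e = snd (the_inv_into P fst e)" for e
  have c: "(e, c e) \<in> P" if "e \<in> fst ` P" for e
    using that the_inv_into_f_f[OF inj] unfolding c_def by force
  have "k_edge_colorable k (fst ` P)"
    unfolding k_edge_colorable_def
  proof (intro exI[of _ c] conjI ballI impI)
    fix e assume "e \<in> fst ` P"
    then show "c e < k" using c P(1) by blast
  next
    fix e e' assume "e \<in> fst ` P" "e' \<in> fst ` P" "e \<noteq> e' \<and> e \<inter> e' \<noteq> {}"
    then show "c e \<noteq> c e'"
      using c[of e] c[of e'] P(2) unfolding proper_coloured_def pairwise_def disjnt_def by fastforce
  qed
  moreover have "fst ` P \<subseteq> E" "card (fst ` P) = card P"
    using P(1) card_image[OF inj] by auto
  ultimately show "n \<in> {card F | F. F \<subseteq> E \<and> k_edge_colorable k F}"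
    using n by (intro CollectI exI[of _ "fst ` P"]) simp
qed

lemma inj_image_Inl: "inj ((`) Inl)"
  by (simp add: inj_image_eq_iff inj_on_def)

lemma inj_spoke: "inj (\<lambda>(i, v). {Inl v, Inr i})"
  by (auto simp: inj_on_def doubleton_eq_iff)

lemma Inl_image_in_join_Ik_E_iff:
  "Inl ` e \<in> join_Ik_E k V E \<longleftrightarrow> e \<in> E"
  unfolding join_Ik_E_def by (auto simp: inj_image_mem_iff[OF inj_image_Inl])

lemma spoke_in_join_Ik_E_iff:
  "{Inl v, Inr i} \<in> join_Ik_E k V E \<longleftrightarrow> v \<in> V \<and> i < k"
  unfolding join_Ik_E_def by (auto simp: doubleton_eq_iff)

lemma Inr_pair_notin_join_Ik_E: "{Inr i, Inr j} \<notin> join_Ik_E k V E"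
  unfolding join_Ik_E_def by (auto simp: doubleton_eq_iff)

definition join_triangle :: "'a set \<times> nat \<Rightarrow> ('a + nat) set" where
  "join_triangle ei = insert (Inr (snd ei)) (Inl ` fst ei)"

lemma inj_join_triangle: "inj join_triangle"
proof (rule injI, clarify)
  fix e i e' j assume eq: "join_triangle (e, i) = join_triangle (e', j)"
  have "e = Inl -` join_triangle (e, i)" "e' = Inl -` join_triangle (e', j)"
       "{i} = Inr -` join_triangle (e, i)" "{j} = Inr -` join_triangle (e', j)"
    unfolding join_triangle_def by auto
  then show "e = e' \<and> i = j"
    using eq by (metis singleton_inject)
qed

lemma tri_edges_join_triangle:
  assumes "u \<noteq> v"
  shows "tri_edges (join_triangle ({u, v}, i)) = {{Inl u, Inl v}, {Inl u, Inr i}, {Inl v, Inr i}}"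
  using assms unfolding tri_edges_def join_triangle_def by (auto simp: card_2_iff)

lemma join_triangles_edge_disjoint_iff:
  assumes "card e = 2" "card e' = 2"
  shows "tri_edges (join_triangle (e, i)) \<inter> tri_edges (join_triangle (e', j)) = {}
     \<longleftrightarrow> e \<noteq> e' \<and> (i = j \<longrightarrow> disjnt e e')"
proof -
  obtain u v u' v' where "u \<noteq> v" "e = {u, v}" "u' \<noteq> v'" "e' = {u', v'}"
    using assms by (auto simp: card_2_iff)
  then show ?thesis
    by (auto simp: tri_edges_join_triangle doubleton_eq_iff disjnt_def)
qed

context
  fixes V :: "'a set" and E :: "'a set set" and k :: nat
  assumes graph: "simple_graph V E"
begin

lemma join_triangle_in_triangles:
  assumes "e \<in> E" "i < k"
  shows "join_triangle (e, i) \<in> triangles (join_Ik_V k V) (join_Ik_E k V E)"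
proof -
  obtain u v where uv: "u \<noteq> v" "e = {u, v}" "u \<in> V" "v \<in> V"
    using graph assms(1) by (rule simple_graph_edgeE)
  have "tri_edges (join_triangle (e, i)) \<subseteq> join_Ik_E k V E"
    using assms uv Inl_image_in_join_Ik_E_iff[of "{u, v}"]
    by (simp add: tri_edges_join_triangle spoke_in_join_Ik_E_iff)
  moreover have "join_triangle (e, i) \<subseteq> join_Ik_V k V" "card (join_triangle (e, i)) = 3"
    using assms uv unfolding join_triangle_def join_Ik_V_def by auto
  ultimately show ?thesis
    unfolding triangles_def tri_edges_def by blast
qed

lemma join_Ik_E_triangleE:
  assumes tf: "triangle_free V E" and t: "t \<in> triangles (join_Ik_V k V) (join_Ik_E k V E)"
  obtains e i where "e \<in> E" "i < k" "t = join_triangle (e, i)"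
proof -
  define L where "L = Inl -` t"
  define R where "R = Inr -` t"
  have t_split: "t = Inl ` L \<union> Inr ` R"
    unfolding L_def R_def by (auto intro: sum.exhaust_sel)
  have t_V: "t \<subseteq> join_Ik_V k V" and card_t: "card t = 3"
    and t_edges: "\<And>p. p \<subseteq> t \<Longrightarrow> card p = 2 \<Longrightarrow> p \<in> join_Ik_E k V E"
    using t unfolding triangles_def by auto
  have "finite t"
    using card_t by (intro card_ge_0_finite) simp
  then have fin: "finite R" and card_LR: "card L + card R = 3"
    using card_t card_sum_set[of t] unfolding L_def R_def by (auto intro: finite_vimageI)
  have L_edge: "e \<in> E" if "e \<subseteq> L" "card e = 2" for e
    using that t_edges[of "Inl ` e"] Inl_image_in_join_Ik_E_iff[of e]
    unfolding t_split by (auto simp: card_image)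
  have "card R \<le> 1"
  proof (rule ccontr)
    assume "\<not> card R \<le> 1"
    then obtain i j where "i \<in> R" "j \<in> R" "i \<noteq> j"
      using card_le_Suc0_iff_eq[OF fin] by auto
    then have "{Inr i, Inr j} \<in> join_Ik_E k V E"
      by (intro t_edges) (auto simp: t_split)
    then show False
      by (simp add: Inr_pair_notin_join_Ik_E)
  qed
  moreover have "card L \<noteq> 3"
  proof
    assume "card L = 3"
    moreover have "L \<subseteq> V"
      using t_V unfolding t_split join_Ik_V_def by auto
    ultimately have "L \<in> triangles V E"
      using L_edge unfolding triangles_def by blast
    then show False
      using tf unfolding triangle_free_def by simp
  qed
  ultimately have "card R = 1" and card_L: "card L = 2"
    using card_LR by linarith+
  then obtain i where R: "R = {i}"
    by (auto simp: card_1_singleton_iff)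
  show thesis
  proof
    show "L \<in> E"
      using L_edge card_L by blast
    show "i < k"
      using t_V unfolding t_split R join_Ik_V_def by auto
    show "t = join_triangle (L, i)"
      unfolding t_split R join_triangle_def by simp
  qed
qed

lemma triangles_join_Ik:
  assumes "triangle_free V E"
  shows "triangles (join_Ik_V k V) (join_Ik_E k V E) = join_triangle ` (E \<times> {..<k})"
proof (intro equalityI subsetI)
  fix t assume "t \<in> triangles (join_Ik_V k V) (join_Ik_E k V E)"
  then obtain e i where "e \<in> E" "i < k" "t = join_triangle (e, i)"
    by (rule join_Ik_E_triangleE[OF assms])
  then show "t \<in> join_triangle ` (E \<times> {..<k})"
    by force
qed (auto intro: join_triangle_in_triangles)

lemma edge_disjoint_join_triangles_iff:
  assumes "P \<subseteq> E \<times> UNIV"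
  shows "pairwise (\<lambda>t t'. tri_edges t \<inter> tri_edges t' = {}) (join_triangle ` P)
     \<longleftrightarrow> proper_coloured P"
proof -
  have "tri_edges (join_triangle (e, i)) \<inter> tri_edges (join_triangle (e', j)) = {}
        \<longleftrightarrow> e \<noteq> e' \<and> (i = j \<longrightarrow> disjnt e e')"
    if "(e, i) \<in> P" "(e', j) \<in> P" for e i e' j
    using that assms graph unfolding simple_graph_def
    by (intro join_triangles_edge_disjoint_iff) auto
  then show ?thesis
    unfolding pairwise_image inj_eq[OF inj_join_triangle]
    unfolding proper_coloured_def pairwise_def Ball_def split_paired_All case_prod_conv
    by simp
qed

lemma packing_card_eq_proper_coloured_card:
  assumes "triangle_free V E"
  shows "{card T | T. T \<subseteq> triangles (join_Ik_V k V) (join_Ik_E k V E) \<and>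
            (\<forall>t1\<in>T. \<forall>t2\<in>T. t1 \<noteq> t2 \<longrightarrow> tri_edges t1 \<inter> tri_edges t2 = {})}
       = {card P | P. P \<subseteq> E \<times> {..<k} \<and> proper_coloured P}"
proof -
  have packing_iff: "T \<subseteq> triangles (join_Ik_V k V) (join_Ik_E k V E) \<and>
        pairwise (\<lambda>t t'. tri_edges t \<inter> tri_edges t' = {}) T
    \<longleftrightarrow> (\<exists>P. P \<subseteq> E \<times> {..<k} \<and> proper_coloured P \<and> T = join_triangle ` P)" for T
  proof -
    have "T \<subseteq> triangles (join_Ik_V k V) (join_Ik_E k V E)
          \<longleftrightarrow> (\<exists>P. P \<subseteq> E \<times> {..<k} \<and> T = join_triangle ` P)"
      unfolding triangles_join_Ik[OF assms] subset_image_iff by blast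
    moreover have "P \<subseteq> E \<times> {..<k} \<Longrightarrow>
        pairwise (\<lambda>t t'. tri_edges t \<inter> tri_edges t' = {}) (join_triangle ` P) \<longleftrightarrow> proper_coloured P" for P
      by (rule edge_disjoint_join_triangles_iff) auto
    ultimately show ?thesis
      by (metis (no_types, lifting))
  qed
  have card_eq: "card (join_triangle ` P) = card P" for P :: "('a set \<times> nat) set"
    using inj_on_subset[OF inj_join_triangle subset_UNIV] by (rule card_image)
  show ?thesis
    unfolding pairwise_def[symmetric] packing_iff
    by (auto simp: card_eq) (metis card_eq)
qed

lemma tri_packing_num_join_Ik:
  assumes "triangle_free V E"
  shows "tri_packing_num (join_Ik_V k V) (join_Ik_E k V E) = max_k_col_edges k V E"
  unfolding tri_packing_num_def max_k_col_edges_def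
    packing_card_eq_proper_coloured_card[OF assms] colourable_card_eq_proper_coloured_card ..

lemma finite_join_Ik_E: "finite (join_Ik_E k V E)"
proof (rule finite_subset)
  show "join_Ik_E k V E \<subseteq> Pow (join_Ik_V k V)"
    using graph unfolding join_Ik_E_def join_Ik_V_def simple_graph_def by auto
  show "finite (Pow (join_Ik_V k V))"
    using finite_vertices[OF graph] unfolding join_Ik_V_def by simp
qed

lemma triangle_free_join_Ik_Diff_iff:
  assumes "triangle_free V E"
  shows "triangle_free (join_Ik_V k V) (join_Ik_E k V E - X)
     \<longleftrightarrow> (\<forall>e\<in>E. \<forall>i<k. tri_edges (join_triangle (e, i)) \<inter> X \<noteq> {})"
  unfolding triangle_free_def triangles_Diff triangles_join_Ik[OF assms] by auto

lemma join_Ik_cover_from_subset: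
  assumes tf: "triangle_free V E" and D: "D \<subseteq> V"
  obtains X where "X \<subseteq> join_Ik_E k V E" "triangle_free (join_Ik_V k V) (join_Ik_E k V E - X)"
    "int (card X) = int k * int (card V) - phi_set k E D"
proof -
  define A where "A = (\<lambda>(i, v). {Inl v, Inr i}) ` ({..<k} \<times> (V - D))"
  define B :: "('a + nat) set set" where "B = (`) Inl ` induced_edges E D"
  have fin: "finite V" "finite (induced_edges E D)"
    using finite_vertices[OF graph] finite_edges[OF graph] unfolding induced_edges_def by auto
  have "card (A \<union> B) = k * card (V - D) + card (induced_edges E D)"
    unfolding A_def B_def using fin
    by (subst card_Un_disjoint)
       (auto simp: card_image inj_on_subset[OF inj_spoke] inj_on_subset[OF inj_image_Inl])
  moreover have "int (card (V - D)) = int (card V) - int (card D)"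
    using fin D by (simp add: card_Diff_subset finite_subset card_mono of_nat_diff)
  ultimately have card_AB: "int (card (A \<union> B)) = int k * int (card V) - phi_set k E D"
    unfolding phi_set_def by (simp add: right_diff_distrib)
  have "A \<union> B \<subseteq> join_Ik_E k V E"
    unfolding A_def B_def join_Ik_E_def induced_edges_def by auto
  moreover have "tri_edges (join_triangle (e, i)) \<inter> (A \<union> B) \<noteq> {}" if ei: "e \<in> E" "i < k" for e i
  proof -
    obtain u v where uv: "u \<noteq> v" "e = {u, v}" "u \<in> V" "v \<in> V"
      using graph ei(1) by (rule simple_graph_edgeE)
    consider "u \<notin> D" | "v \<notin> D" | "e \<in> induced_edges E D"
      using uv ei unfolding induced_edges_def by auto
    then show ?thesis
    proof cases
      case 1
      then have "{Inl u, Inr i} \<in> A"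
        unfolding A_def using uv ei by (auto intro!: image_eqI[where x = "(i, u)"])
      then show ?thesis
        using uv by (auto simp: tri_edges_join_triangle)
    next
      case 2
      then have "{Inl v, Inr i} \<in> A"
        unfolding A_def using uv ei by (auto intro!: image_eqI[where x = "(i, v)"])
      then show ?thesis
        using uv by (auto simp: tri_edges_join_triangle)
    next
      case 3
      then have "{Inl u, Inl v} \<in> B"
        unfolding B_def using uv by (auto intro!: image_eqI[where x = e])
      then show ?thesis
        using uv by (auto simp: tri_edges_join_triangle)
    qed
  qed
  ultimately show thesis
    using that[OF _ _ card_AB] unfolding triangle_free_join_Ik_Diff_iff[OF tf] by blast
qed

lemma join_Ik_cover_card_ge:
  assumes tf: "triangle_free V E" and X: "X \<subseteq> join_Ik_E k V E"
    and X_tf: "triangle_free (join_Ik_V k V) (join_Ik_E k V E - X)"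
  defines "D \<equiv> \<lambda>i. {v \<in> V. {Inl v, Inr i} \<notin> X}"
  shows "(\<Sum>i<k. card (V - D i)) + card (\<Union>i<k. induced_edges E (D i)) \<le> card X"
proof -
  define U where "U = (\<Union>i<k. induced_edges E (D i))"
  define A where "A = (\<lambda>(i, v). {Inl v, Inr i}) ` (SIGMA i:{..<k}. V - D i)"
  define B :: "('a + nat) set set" where "B = (`) Inl ` U"
  have fin: "finite V" "finite U"
    using finite_vertices[OF graph] finite_edges[OF graph] unfolding U_def induced_edges_def by auto
  have "card (A \<union> B) = (\<Sum>i<k. card (V - D i)) + card U"
    unfolding A_def B_def using fin
    by (subst card_Un_disjoint)
       (auto simp: card_image inj_on_subset[OF inj_spoke] inj_on_subset[OF inj_image_Inl])
  moreover have "A \<subseteq> X"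
    unfolding A_def D_def by auto
  moreover have "B \<subseteq> X"
  proof
    fix f assume "f \<in> B"
    then obtain i e where i: "i < k" and e: "e \<in> E" "e \<subseteq> D i" and f: "f = Inl ` e"
      unfolding B_def U_def induced_edges_def by auto
    obtain u v where uv: "u \<noteq> v" "e = {u, v}"
      using graph e(1) by (rule simple_graph_edgeE)
    have "tri_edges (join_triangle (e, i)) \<inter> X \<noteq> {}"
      using X_tf e(1) i unfolding triangle_free_join_Ik_Diff_iff[OF tf] by blast
    moreover have "{Inl u, Inr i} \<notin> X" "{Inl v, Inr i} \<notin> X"
      using e(2) uv(2) unfolding D_def by auto
    ultimately show "f \<in> X"
      using uv f by (auto simp: tri_edges_join_triangle)
  qed
  ultimately show ?thesis
    using card_mono[OF finite_subset[OF X finite_join_Ik_E], of "A \<union> B"]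
    unfolding U_def by simp
qed

lemma join_Ik_cover_lower:
  assumes tf: "triangle_free V E" and k: "k \<ge> 1" and X: "X \<subseteq> join_Ik_E k V E"
    and X_tf: "triangle_free (join_Ik_V k V) (join_Ik_E k V E - X)"
  obtains D where "D \<subseteq> V" "int k * int (card V) - phi_set k E D \<le> int (card X)"
proof -
  define D where "D = (\<lambda>i. {v \<in> V. {Inl v, Inr i} \<notin> X})"
  define U where "U = (\<Union>i<k. induced_edges E (D i))"
  have D_V: "D i \<subseteq> V" for i
    unfolding D_def by auto
  have count: "(\<Sum>i<k. card (V - D i)) + card U \<le> card X"
    using join_Ik_cover_card_ge[OF tf X X_tf] unfolding U_def D_def .
  have "finite U"
    using finite_edges[OF graph] unfolding U_def induced_edges_def by auto
  then have U_ge: "card (induced_edges E (D i)) \<le> card U" if "i < k" for i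
    using that unfolding U_def by (auto intro: card_mono)
  have phi_D: "int k * int (card V) - phi_set k E (D i)
      = int k * int (card (V - D i)) + int (card (induced_edges E (D i)))" for i
    using finite_vertices[OF graph] D_V[of i]
    by (simp add: phi_set_def card_Diff_subset finite_subset card_mono of_nat_diff algebra_simps)
  have "(\<Sum>i<k. int k * int (card V) - phi_set k E (D i))
      \<le> (\<Sum>i<k. int k * int (card (V - D i)) + int (card U))"
    unfolding phi_D using U_ge by (intro sum_mono) simp
  also have "\<dots> = int k * int ((\<Sum>i<k. card (V - D i)) + card U)"
    by (simp add: sum.distrib sum_distrib_left algebra_simps)
  also have "\<dots> \<le> int k * int (card X)"
    using count by (intro mult_left_mono of_nat_mono) auto
  finally have "\<exists>i\<in>{..<k}. int k * int (card V) - phi_set k E (D i) \<le> int (card X)"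
    using k by (intro exists_le_average) (auto simp: lessThan_empty_iff)
  then show thesis
    using that D_V by blast
qed

lemma tri_cover_num_join_Ik:
  assumes tf: "triangle_free V E" and k: "k \<ge> 1"
  shows "int (tri_cover_num (join_Ik_V k V) (join_Ik_E k V E)) = int k * int (card V) - phi k V E"
proof -
  note finV = finite_vertices[OF graph]
  obtain D0 where D0: "D0 \<subseteq> V" "phi k V E = phi_set k E D0"
    using finV by (rule phi_attained)
  obtain X0 where X0: "X0 \<subseteq> join_Ik_E k V E" "triangle_free (join_Ik_V k V) (join_Ik_E k V E - X0)"
    and card_X0: "int (card X0) = int k * int (card V) - phi k V E"
    using tf D0(1) unfolding D0(2) by (rule join_Ik_cover_from_subset)
  have "tri_cover_num (join_Ik_V k V) (join_Ik_E k V E) = card X0"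
    unfolding tri_cover_num_def
  proof (rule Min_eqI)
    have "{card X | X. X \<subseteq> join_Ik_E k V E \<and> triangle_free (join_Ik_V k V) (join_Ik_E k V E - X)}
          \<subseteq> card ` Pow (join_Ik_E k V E)"
      by auto
    then show "finite {card X | X. X \<subseteq> join_Ik_E k V E \<and>
                 triangle_free (join_Ik_V k V) (join_Ik_E k V E - X)}"
      by (rule finite_subset) (simp add: finite_join_Ik_E)
  next
    fix n assume "n \<in> {card X | X. X \<subseteq> join_Ik_E k V E \<and>
                   triangle_free (join_Ik_V k V) (join_Ik_E k V E - X)}"
    then obtain X where n: "n = card X" and X: "X \<subseteq> join_Ik_E k V E"
      "triangle_free (join_Ik_V k V) (join_Ik_E k V E - X)"
      by blast
    obtain D where D: "D \<subseteq> V" "int k * int (card V) - phi_set k E D \<le> int (card X)"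
      using tf k X by (rule join_Ik_cover_lower)
    have "phi_set k E D \<le> phi k V E"
      using finV D(1) by (rule phi_set_le_phi)
    then show "card X0 \<le> n"
      using D(2) card_X0 n by linarith
  qed (use X0 in blast)
  then show ?thesis
    using card_X0 by simp
qed

end

theorem mainTheorem7:
  fixes V :: "'a set" and E :: "'a set set" and k :: nat
  assumes "simple_graph V E" and "triangle_free V E" and "k \<ge> 1"
  shows "tri_packing_num (join_Ik_V k V) (join_Ik_E k V E) = max_k_col_edges k V E
       \<and> int (tri_cover_num (join_Ik_V k V) (join_Ik_E k V E)) = int k * int (card V) - phi k V E"
  using tri_packing_num_join_Ik[OF assms(1,2)] tri_cover_num_join_Ik[OF assms] by blast

end
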